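(* Let $\mathcal G(\mathcal V,\mathcal E)$ be the interference graph of a cellular network. In the uplink, let $\mathbf H_{uv}\in\mathbb C^{N\times M}$ be the channel from the transmitter of cell $v$ to the receiver of cell $u$ (zero if $(u,v)\notin\mathcal E$, $u\ne v$), and let $\pi$ be a decoding order. Suppose degrees of freedom $\{d_v\}_{v\in\mathcal V}$ are achieved in the uplink by one-shot linear interference alignment under the network interference cancellation (decoded-message passing) framework with order $\pi$, with transmit beamformers $\mathbf V_v\in\mathbb C^{M\times d_v}$ and receive beamformers $\mathbf U_u\in\mathbb C^{N\times d_u}$, i.e. $$\mathbf U_u^{\mathrm H}\mathbf H_{uv}\mathbf V_v=0\quad\text{for all }(u,v)\in\mathcal E\text{ with }u\prec_\pi v,\qquad \operatorname{rank}(\mathbf U_v^{\mathrm H}\mathbf H_{vv}\mathbf V_v)=d_v\ \ \forall v\in\mathcal V.$$ Consider the downlink of the same network with reciprocal channels $\overline{\mathbf H}_{uv}=\mathbf H_{vu}^{\mathrm H}\in\mathbb C^{M\times N}$ (from base-station $v$, with $N$ antennas, to the receiver of cell $u$, with $M$ antennas), the reversed encoding order $\overline\pi$ defined by $u\prec_{\overline\pi}v\iff v\prec_\pi u$, and beamformers $\overline{\mathbf V}_v=\mathbf U_v\in\mathbb C^{N\times d_v}$ (transmit) and $\overline{\mathbf U}_u=\mathbf V_u\in\mathbb C^{M\times d_u}$ (receive). Then $$\overline{\mathbf U}_u^{\mathrm H}\overline{\mathbf H}_{uv}\overline{\mathbf V}_v=0\quad\text{for all }(u,v)\in\mathcal E\text{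 with }u\prec_{\overline\pi}v,\qquad \operatorname{rank}(\overline{\mathbf U}_v^{\mathrm H}\overline{\mathbf H}_{vv}\overline{\mathbf V}_v)=d_v\ \ \forall v\in\mathcal V,$$ and consequently, under the successive dirty-paper coding framework with encoding order $\overline\pi$ (in which each base-station quantizes its DPC signal at rate $\log P$ per stream and shares it over the backhaul with later-encoding neighbors), every cell $u$ achieves $d_u$ degrees of freedom in the downlink.
   Context: Interference graph: an undirected graph $\mathcal G(\mathcal V,\mathcal E)$ whose vertices represent transmit–receive pairs (cells) and whose edges indicate interfering neighbors. A decoding/encoding order $\pi$ is a partial order $\prec_\pi$ on $\mathcal V$; cell $v$ decodes (encodes) before cell $u$ if $v\prec_\pi u$. In the uplink decoded-message passing framework, the receiver of cell $u$ can cancel interference from neighbors $v$ with $v\prec_\pi u$ (already decoded), so only interference from neighbors $v$ with $u\prec_\pi v$ must be aligned/zero-forced. In the downlink successive DPC framework with order $\overline\pi$, after DPC the receiver of cell $u$ sees only interference from neighbors $v$ with $u\prec_{\overline\pi}v$ plus Gaussian noise whose covariance is $\mathbf I+\sum_{v:\,v\prec_{\overline\pi}u}\overline{\mathbf H}_{uv}\overline{\mathbf V}_v\overline{\mathbf V}_v^{\mathrm H}\overline{\mathbf H}_{uv}^{\mathrm H}$, independent of $P$. Cell $u$ achieves $d_u$ degrees of freedom if its achievable rate $R_u(P)$ satisfies $\lim_{P\to\infty}R_u(P)/\log P=d_u$, where $P$ is the transmit power. *)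

theory Defs
  imports "Jordan_Normal_Form.Schur_Decomposition" "Jordan_Normal_Form.DL_Rank"
begin

abbreviation herm :: "complex mat \<Rightarrow> complex mat" where
  "herm A \<equiv> mat_adjoint A"

definition msum :: "nat \<Rightarrow> nat \<Rightarrow> 'v set \<Rightarrow> ('v \<Rightarrow> complex mat) \<Rightarrow> complex mat" where
  "msum r c S A = mat r c (\<lambda>(i,j). \<Sum>v\<in>S. A v $$ (i,j))"

definition strict_partial_order_on :: "'v set \<Rightarrow> ('v \<Rightarrow> 'v \<Rightarrow> bool) \<Rightarrow> bool" where
  "strict_partial_order_on V r \<longleftrightarrow>
     (\<forall>u\<in>V. \<not> r u u) \<and> (\<forall>u\<in>V. \<forall>v\<in>V. \<forall>w\<in>V. r u v \<and> r v w \<longrightarrow> r u w)"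

definition interference_graph :: "'v set \<Rightarrow> ('v \<Rightarrow> 'v \<Rightarrow> bool) \<Rightarrow> bool" where
  "interference_graph V E \<longleftrightarrow> finite V \<and>
     (\<forall>u v. E u v \<longrightarrow> u \<in> V \<and> v \<in> V) \<and> (\<forall>u v. E u v \<longrightarrow> E v u) \<and> (\<forall>u. \<not> E u u)"

(* Achievable rate of cell u in the downlink successive-DPC framework with encoding order
   precd (precd a b means a encodes before b), channels Hd u v (from BS v to receiver u,
   Mr receive antennas), transmit beamformers Tx, receive beamformers Rx, power P.
   After DPC, receiver u sees the desired signal sqrt P * Hd u u * Tx u * s_u, interference
   sqrt P * Hd u v * Tx v * s_v from neighbours v with precd u v, and Gaussian noise with
   covariance Q_u = I + sum_{v neighbour, precd v u} Hd u v Tx v Tx v^H Hd u v^H (independent of P).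
   With Gaussian inputs s_v ~ CN(0,I) and linear receive filter Rx u, treating the residual
   interference as noise, the rate is
   log det(Rx^H (Q_u + P*Interf + P*Signal) Rx) - log det(Rx^H (Q_u + P*Interf) Rx). *)
definition dl_dpc_rate ::
  "'v set \<Rightarrow> ('v \<Rightarrow> 'v \<Rightarrow> bool) \<Rightarrow> ('v \<Rightarrow> 'v \<Rightarrow> bool) \<Rightarrow> nat \<Rightarrow>
   ('v \<Rightarrow> 'v \<Rightarrow> complex mat) \<Rightarrow> ('v \<Rightarrow> complex mat) \<Rightarrow> ('v \<Rightarrow> complex mat) \<Rightarrow> 'v \<Rightarrow> real \<Rightarrow> real"
where
  "dl_dpc_rate V E precd Mr Hd Tx Rx u P =
    (let cov = (\<lambda>v. Hd u v * Tx v * herm (Tx v) * herm (Hd u v));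
         Q = 1\<^sub>m Mr + msum Mr Mr {v\<in>V. E u v \<and> precd v u} cov;
         Intf = msum Mr Mr {v\<in>V. E u v \<and> precd u v} cov;
         B = herm (Rx u) * (Q + complex_of_real P \<cdot>\<^sub>m Intf) * Rx u;
         S = herm (Rx u) * (complex_of_real P \<cdot>\<^sub>m cov u) * Rx u
     in log 2 (Re (det (B + S))) - log 2 (Re (det B)))"

definition achieves_dof :: "(real \<Rightarrow> real) \<Rightarrow> nat \<Rightarrow> bool" where
  "achieves_dof R d \<longleftrightarrow> ((\<lambda>P. R P / log 2 P) \<longlongrightarrow> real d) at_top"

end

theory Submission imports Defs "HOL-Real_Asymp.Real_Asymp" begin

(* The proof has an algebraic and an asymptotic half.
   (1) Algebra of the Hermitian transpose: (A B C)^H = C^H B^H A^H and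
       det(K^H) = conj(det K).  Hence every uplink zero-forcing condition
       U_u^H H_uv V_v = 0 turns into the reciprocal downlink condition
       V_v^H H_uv^H U_u = 0, and full rank of the square effective channel
       U_v^H H_vv V_v carries over to its Hermitian transpose.
   (2) Rate analysis of a single downlink cell u: if the receive filter R = Rx u
       zero-forces all interference that is not removed by DPC, and the effective
       channel G = R^H Hd_uu Tx_u is nonsingular, the rate collapses to
       log det(B + P G G^H) - log det B with B independent of P; since
       det(B + P S) = P^n det(S + B/P) and det(S + B/P) -> det S > 0, the rate
       grows like n log P, i.e. the cell achieves n degrees of freedom. *)

subsection \<open>The Hermitian transpose\<close>

lemma herm_carrier: "A \<in> carrier_mat n m \<Longrightarrow> herm A \<in> carrier_mat m n"
  unfolding mat_adjoint_def by auto

lemma herm_dims[simp]: "dim_row (herm A) = dim_col A" "dim_col (herm A) = dim_row A"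
  unfolding mat_adjoint_def by auto

lemma herm_index[simp]:
  "i < dim_col A \<Longrightarrow> j < dim_row A \<Longrightarrow> herm A $$ (i,j) = cnj (A $$ (j,i))"
  unfolding mat_adjoint_def by (auto simp: mat_of_rows_def)

lemma herm_herm[simp]: "herm (herm A) = A"
  by (rule eq_matI) auto

lemma herm_zero[simp]: "herm (0\<^sub>m n m) = 0\<^sub>m m n"
  by (rule eq_matI) auto

lemma herm_mult:
  "A \<in> carrier_mat n k \<Longrightarrow> B \<in> carrier_mat k m \<Longrightarrow> herm (A * B) = herm B * herm A"
  by (rule eq_matI) (auto simp: scalar_prod_def cnj_sum intro!: sum.cong)

lemma herm_mult3:
  assumes "A \<in> carrier_mat n k" "B \<in> carrier_mat k l" "C \<in> carrier_mat l m"
  shows "herm (A * B * C) = herm C * herm B * herm A"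
proof -
  have "herm (A * B * C) = herm C * herm (A * B)"
    by (rule herm_mult[OF mult_carrier_mat[OF assms(1,2)] assms(3)])
  also have "herm (A * B) = herm B * herm A"
    by (rule herm_mult[OF assms(1,2)])
  also have "herm C * (herm B * herm A) = herm C * herm B * herm A"
    by (rule assoc_mult_mat[OF herm_carrier[OF assms(3)] herm_carrier[OF assms(2)]
          herm_carrier[OF assms(1)], symmetric])
  finally show ?thesis .
qed

lemma det_herm:
  assumes "K \<in> carrier_mat n n"
  shows "det (herm K) = cnj (det K)"
proof -
  have "herm K = transpose_mat (map_mat cnj K)"
    by (rule eq_matI) auto
  moreover have "det (map_mat cnj K) = cnj (det K)"
    unfolding det_def by (simp add: cnj_sum cnj_prod sign_def)
  ultimately show ?thesis
    using assms by (simp add: det_transpose)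
qed

subsection \<open>Reciprocity of zero-forcing and of full rank\<close>

lemma herm_triple_zero:
  assumes "A \<in> carrier_mat n k" "B \<in> carrier_mat k l" "C \<in> carrier_mat l m"
    and "A * B * C = 0\<^sub>m n m"
  shows "herm C * herm B * herm A = 0\<^sub>m m n"
  using herm_mult3[OF assms(1-3)] assms(4) by simp

lemma full_rank_herm:
  assumes K: "K \<in> carrier_mat n n" and rank: "vec_space.rank n K = n"
  shows "vec_space.rank n (herm K) = n"
proof -
  have "det K \<noteq> 0" using vec_space.det_rank_iff[OF K] rank by simp
  then have "det (herm K) \<noteq> 0" by (simp add: det_herm[OF K])
  then show ?thesis using vec_space.det_rank_iff[OF herm_carrier[OF K]] by simp
qed

lemma gram_factor:
  assumes "A \<in> carrier_mat n k" "B \<in> carrier_mat k m"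
  shows "A * B * herm B * herm A = (A * B) * herm (A * B)"
  using assms by (simp add: herm_mult[OF assms] herm_carrier assoc_mult_mat[of "A * B" n m _ k _ n])

(* the Gram matrix of a nonsingular matrix has positive determinant |det G|^2 *)
lemma gram_det_pos:
  assumes G: "G \<in> carrier_mat n n" and nonsing: "det G \<noteq> 0"
  shows "Re (det (G * herm G)) > 0"
proof -
  have "det (G * herm G) = det G * cnj (det G)"
    using G by (simp add: det_mult[OF G herm_carrier[OF G]] det_herm)
  also have "\<dots> = complex_of_real ((cmod (det G))\<^sup>2)"
    by (simp only: complex_norm_square of_real_power[symmetric])
  finally show ?thesis using nonsing by simp
qed

lemma gram_compress:
  assumes R: "R \<in> carrier_mat m n" and W: "W \<in> carrier_mat m k"
  shows "herm R * (W * herm W) * R = (herm R * W) * herm (herm R * W)"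
proof -
  have hR: "herm R \<in> carrier_mat n m" and hW: "herm W \<in> carrier_mat k m"
    using R W by (auto intro: herm_carrier)
  have "herm R * (W * herm W) * R = herm R * ((W * herm W) * R)"
    by (rule assoc_mult_mat[OF hR mult_carrier_mat[OF W hW] R])
  also have "(W * herm W) * R = W * (herm W * R)"
    by (rule assoc_mult_mat[OF W hW R])
  also have "herm R * (W * (herm W * R)) = herm R * W * (herm W * R)"
    by (rule assoc_mult_mat[OF hR W mult_carrier_mat[OF hW R], symmetric])
  also have "herm W * R = herm (herm R * W)"
    using herm_mult[OF hR W] by simp
  finally show ?thesis .
qed

lemma gram_annihilate:
  assumes R: "R \<in> carrier_mat m n" and W: "W \<in> carrier_mat m k"
    and orth: "herm R * W = 0\<^sub>m n k"
  shows "W * herm W * R = 0\<^sub>m m n"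
proof -
  have hR: "herm R \<in> carrier_mat n m" and hW: "herm W \<in> carrier_mat k m"
    using R W by (auto intro: herm_carrier)
  have "herm W * R = 0\<^sub>m k n"
    using herm_mult[OF hR W] orth by simp
  then show ?thesis
    using assoc_mult_mat[OF W hW R] W by simp
qed

lemma msum_dims[simp]: "dim_row (msum r c S A) = r" "dim_col (msum r c S A) = c"
  unfolding msum_def by auto

lemma msum_carrier[simp]: "msum r c S A \<in> carrier_mat r c"
  unfolding msum_def by auto

lemma msum_mult_zero:
  assumes fin: "finite S" and A: "\<And>v. v \<in> S \<Longrightarrow> A v \<in> carrier_mat m m"
    and R: "R \<in> carrier_mat m c" and zero: "\<And>v. v \<in> S \<Longrightarrow> A v * R = 0\<^sub>m m c"
  shows "msum m m S A * R = 0\<^sub>m m c"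
proof (rule eq_matI)
  fix i j assume i: "i < dim_row (0\<^sub>m m c :: complex mat)" and j: "j < dim_col (0\<^sub>m m c :: complex mat)"
  have entry: "(A v * R) $$ (i,j) = (\<Sum>k<m. A v $$ (i,k) * R $$ (k,j))" if "v \<in> S" for v
    using i j R A[OF that] by (auto simp: scalar_prod_def atLeast0LessThan intro!: sum.cong)
  have "(msum m m S A * R) $$ (i,j) = (\<Sum>k<m. (\<Sum>v\<in>S. A v $$ (i,k)) * R $$ (k,j))"
    using i j R by (auto simp: msum_def scalar_prod_def atLeast0LessThan intro!: sum.cong)
  also have "\<dots> = (\<Sum>v\<in>S. \<Sum>k<m. A v $$ (i,k) * R $$ (k,j))"
    by (simp add: sum_distrib_right sum.swap[of _ S])
  also have "\<dots> = (\<Sum>v\<in>S. (A v * R) $$ (i,j))"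
    by (simp add: entry)
  also have "\<dots> = 0" using zero i j by simp
  finally show "(msum m m S A * R) $$ (i,j) = 0\<^sub>m m c $$ (i,j)" using i j by simp
qed (use R in auto)

subsection \<open>Degrees of freedom of a log-det rate\<close>

(* the determinant is continuous: det(S + B/P) -> det S as P -> infinity *)
lemma det_perturb_tendsto:
  fixes B S :: "complex mat"
  assumes B: "B \<in> carrier_mat n n" and S: "S \<in> carrier_mat n n"
  shows "((\<lambda>P::real. det (S + complex_of_real (1/P) \<cdot>\<^sub>m B)) \<longlongrightarrow> det S) at_top"
proof -
  let ?term = "\<lambda>x p. signof p * (\<Prod>i = 0..<n. S $$ (i, p i) + x * B $$ (i, p i))"
  have expand: "det (S + x \<cdot>\<^sub>m B) = (\<Sum>p\<in>{p. p permutes {0..<n}}. ?term x p)" for x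
    using B S by (subst det_def'[of _ n]) (auto intro!: sum.cong prod.cong)
  have "((\<lambda>P::real. 1/P) \<longlongrightarrow> 0) at_top" by real_asymp
  from tendsto_of_real[OF this, where 'a=complex]
  have "((\<lambda>P::real. complex_of_real (1/P)) \<longlongrightarrow> 0) at_top"
    by (simp del: of_real_divide)
  then have "((\<lambda>P::real. \<Sum>p\<in>{p. p permutes {0..<n}}. ?term (complex_of_real (1/P)) p)
               \<longlongrightarrow> (\<Sum>p\<in>{p. p permutes {0..<n}}. ?term 0 p)) at_top"
    by (intro tendsto_intros)
  moreover have "(\<Sum>p\<in>{p. p permutes {0..<n}}. ?term 0 p) = det S"
    using S by (simp add: det_def'[of _ n])
  ultimately show ?thesis by (simp only: expand)
qed

lemma log_det_rate_dof:
  fixes B S :: "complex mat"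
  assumes B: "B \<in> carrier_mat n n" and S: "S \<in> carrier_mat n n" and pos: "Re (det S) > 0"
  shows "achieves_dof (\<lambda>P. log 2 (Re (det (B + complex_of_real P \<cdot>\<^sub>m S))) - log 2 (Re (det B))) n"
proof -
  define r where "r P = Re (det (S + complex_of_real (1/P) \<cdot>\<^sub>m B))" for P
  define K where "K = log 2 (Re (det B))"
  have r_lim: "(r \<longlongrightarrow> Re (det S)) at_top"
    unfolding r_def by (intro tendsto_intros det_perturb_tendsto[OF B S])
  have r_pos: "eventually (\<lambda>P. r P > 0) at_top"
    using order_tendstoD(1)[OF r_lim pos] .
  (* factor out the power P^n *)
  have factor: "Re (det (B + complex_of_real P \<cdot>\<^sub>m S)) = P ^ n * r P" if "P > 0" for P
  proof -
    have "B + complex_of_real P \<cdot>\<^sub>m S = complex_of_real P \<cdot>\<^sub>m (S + complex_of_real (1/P) \<cdot>\<^sub>m B)"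
      using B S that by (intro eq_matI) (auto simp: algebra_simps)
    then have "det (B + complex_of_real P \<cdot>\<^sub>m S) = complex_of_real P ^ n * det (S + complex_of_real (1/P) \<cdot>\<^sub>m B)"
      using S B by simp
    then show ?thesis unfolding r_def by (simp flip: of_real_power)
  qed
  have "filterlim (\<lambda>P::real. log 2 P) at_top at_top" by real_asymp
  moreover have "((\<lambda>P. log 2 (r P) - K) \<longlongrightarrow> log 2 (Re (det S)) - K) at_top"
    by (intro tendsto_intros r_lim) (use pos in auto)
  ultimately have "((\<lambda>P. (log 2 (r P) - K) / log 2 P) \<longlongrightarrow> 0) at_top"
    by (intro tendsto_divide_0) (auto intro: filterlim_at_top_imp_at_infinity)
  then have lim: "((\<lambda>P. real n + (log 2 (r P) - K) / log 2 P) \<longlongrightarrow> real n) at_top"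
    using tendsto_add[OF tendsto_const[of "real n"]] by fastforce
  have same: "eventually (\<lambda>P. real n + (log 2 (r P) - K) / log 2 P =
     (log 2 (Re (det (B + complex_of_real P \<cdot>\<^sub>m S))) - log 2 (Re (det B))) / log 2 P) at_top"
    using r_pos eventually_gt_at_top[of 1]
  proof eventually_elim
    case (elim P)
    then have "log 2 P > 0" by simp
    then have logP: "log 2 P \<noteq> 0" by simp
    have "log 2 (P ^ n * r P) = real n * log 2 P + log 2 (r P)"
      using elim by (simp add: log_mult log_nat_power)
    then show ?case using factor[of P] elim logP unfolding K_def
      by (simp add: diff_divide_distrib add_divide_distrib mult.commute)
  qed
  show ?thesis unfolding achieves_dof_def using tendsto_cong[OF same] lim by simp
qed

subsection \<open>Degrees of freedom of a zero-forced downlink cell\<close>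

(* If the receive filter of cell u zero-forces every neighbour encoded after u
   (the interference DPC cannot remove), the DPC rate of u is a log-det ratio
   log det(B + P G G^H) - log det B whose denominator B does not depend on P;
   G is the effective channel of u. *)
lemma dl_dpc_rate_zero_forced:
  fixes Hd :: "'v \<Rightarrow> 'v \<Rightarrow> complex mat" and Tx Rx :: "'v \<Rightarrow> complex mat"
  assumes fin: "finite V" and u: "u \<in> V"
    and Hd_dim: "\<And>v. v \<in> V \<Longrightarrow> Hd u v \<in> carrier_mat Mr Nt"
    and Tx_dim: "\<And>v. v \<in> V \<Longrightarrow> Tx v \<in> carrier_mat Nt (dt v)"
    and Rx_dim: "Rx u \<in> carrier_mat Mr (dt u)"
    and zf: "\<And>v. v \<in> V \<Longrightarrow> E u v \<Longrightarrow> precd u v \<Longrightarrow>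
               herm (Rx u) * Hd u v * Tx v = 0\<^sub>m (dt u) (dt v)"
  obtains B where "B \<in> carrier_mat (dt u) (dt u)"
    and "dl_dpc_rate V E precd Mr Hd Tx Rx u = (\<lambda>P. log 2 (Re (det (B + complex_of_real P \<cdot>\<^sub>m
           ((herm (Rx u) * (Hd u u * Tx u)) * herm (herm (Rx u) * (Hd u u * Tx u)))))) - log 2 (Re (det B)))"
proof -
  define n where "n = dt u"
  define R where "R = Rx u"
  define W where "W v = Hd u v * Tx v" for v
  define cov where "cov v = Hd u v * Tx v * herm (Tx v) * herm (Hd u v)" for v
  define Q where "Q = 1\<^sub>m Mr + msum Mr Mr {v\<in>V. E u v \<and> precd v u} cov"
  define I where "I = msum Mr Mr {v\<in>V. E u v \<and> precd u v} cov"
  define S where "S = (herm R * W u) * herm (herm R * W u)"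
  have Q: "Q \<in> carrier_mat Mr Mr" and I: "I \<in> carrier_mat Mr Mr"
    unfolding Q_def I_def by auto
  have R: "R \<in> carrier_mat Mr n" and hR: "herm R \<in> carrier_mat n Mr"
    using Rx_dim herm_carrier unfolding R_def n_def by auto
  have W: "W v \<in> carrier_mat Mr (dt v)" if "v \<in> V" for v
    using Hd_dim[OF that] Tx_dim[OF that] unfolding W_def by auto
  have cov_gram: "cov v = W v * herm (W v)" if "v \<in> V" for v
    unfolding cov_def W_def by (rule gram_factor[OF Hd_dim[OF that] Tx_dim[OF that]])
  have cov: "cov v \<in> carrier_mat Mr Mr" if "v \<in> V" for v
    using W[OF that] herm_carrier[OF W[OF that]] cov_gram[OF that] by auto
  have IR: "I * R = 0\<^sub>m Mr n"
    unfolding I_def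
  proof (rule msum_mult_zero[OF _ _ R])
    show "finite {v \<in> V. E u v \<and> precd u v}" using fin by simp
    fix v assume "v \<in> {v \<in> V. E u v \<and> precd u v}"
    then have v: "v \<in> V" and e: "E u v" and p: "precd u v" by auto
    show "cov v \<in> carrier_mat Mr Mr" using cov[OF v] .
    have "herm R * W v = 0\<^sub>m n (dt v)"
      using zf[OF v e p] assoc_mult_mat[OF hR Hd_dim[OF v] Tx_dim[OF v]]
      unfolding W_def R_def n_def by simp
    then show "cov v * R = 0\<^sub>m Mr n"
      unfolding cov_gram[OF v] by (rule gram_annihilate[OF R W[OF v]])
  qed
  have noise: "herm R * (Q + complex_of_real P \<cdot>\<^sub>m I) * R = herm R * Q * R" for P
  proof -
    have "herm R * (Q + complex_of_real P \<cdot>\<^sub>m I) * R = herm R * (Q * R + complex_of_real P \<cdot>\<^sub>m (I * R))"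
      using hR Q I R
      by (simp add: assoc_mult_mat[of _ n Mr _ Mr _ n] add_mult_distrib_mat[of _ Mr Mr _ _ n]
            mult_smult_assoc_mat[of _ Mr Mr _ n])
    then show ?thesis unfolding IR using hR Q R by simp
  qed
  have signal: "herm R * (complex_of_real P \<cdot>\<^sub>m cov u) * R = complex_of_real P \<cdot>\<^sub>m S" for P
    using hR cov[OF u] R gram_compress[OF R W[OF u]]
    by (simp add: mult_smult_distrib[of _ n Mr _ Mr] mult_smult_assoc_mat[of _ n Mr _ n]
          cov_gram[OF u] S_def del: assoc_mult_mat)
  show thesis
  proof
    show "herm R * Q * R \<in> carrier_mat (dt u) (dt u)"
      using mult_carrier_mat[OF mult_carrier_mat[OF hR Q] R] unfolding n_def .
    show "dl_dpc_rate V E precd Mr Hd Tx Rx u = (\<lambda>P. log 2 (Re (det (herm R * Q * R +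
           complex_of_real P \<cdot>\<^sub>m ((herm (Rx u) * (Hd u u * Tx u)) * herm (herm (Rx u) * (Hd u u * Tx u))))))
           - log 2 (Re (det (herm R * Q * R))))"
      using noise signal unfolding dl_dpc_rate_def Let_def Q_def I_def cov_def R_def S_def W_def
      by simp
  qed
qed

lemma dl_dpc_zero_forced_dof:
  fixes Hd :: "'v \<Rightarrow> 'v \<Rightarrow> complex mat" and Tx Rx :: "'v \<Rightarrow> complex mat"
  assumes fin: "finite V" and u: "u \<in> V"
    and Hd_dim: "\<And>v. v \<in> V \<Longrightarrow> Hd u v \<in> carrier_mat Mr Nt"
    and Tx_dim: "\<And>v. v \<in> V \<Longrightarrow> Tx v \<in> carrier_mat Nt (dt v)"
    and Rx_dim: "Rx u \<in> carrier_mat Mr (dt u)"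
    and zf: "\<And>v. v \<in> V \<Longrightarrow> E u v \<Longrightarrow> precd u v \<Longrightarrow>
               herm (Rx u) * Hd u v * Tx v = 0\<^sub>m (dt u) (dt v)"
    and rank: "vec_space.rank (dt u) (herm (Rx u) * Hd u u * Tx u) = dt u"
  shows "achieves_dof (dl_dpc_rate V E precd Mr Hd Tx Rx u) (dt u)"
proof -
  obtain B where B: "B \<in> carrier_mat (dt u) (dt u)"
    and rate: "dl_dpc_rate V E precd Mr Hd Tx Rx u = (\<lambda>P. log 2 (Re (det (B + complex_of_real P \<cdot>\<^sub>m
           ((herm (Rx u) * (Hd u u * Tx u)) * herm (herm (Rx u) * (Hd u u * Tx u)))))) - log 2 (Re (det B)))"
    by (rule dl_dpc_rate_zero_forced[where Hd = Hd and Tx = Tx and Rx = Rx and dt = dt and u = u,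
          OF fin u Hd_dim Tx_dim Rx_dim zf])
  define G where "G = herm (Rx u) * (Hd u u * Tx u)"
  have G: "G \<in> carrier_mat (dt u) (dt u)"
    using herm_carrier[OF Rx_dim] Hd_dim[OF u] Tx_dim[OF u] unfolding G_def by auto
  have "G = herm (Rx u) * Hd u u * Tx u"
    unfolding G_def by (rule assoc_mult_mat[OF herm_carrier[OF Rx_dim] Hd_dim[OF u] Tx_dim[OF u], symmetric])
  then have "det G \<noteq> 0"
    using vec_space.det_rank_iff[OF G] rank by simp
  then have "Re (det (G * herm G)) > 0"
    by (rule gram_det_pos[OF G])
  then show ?thesis
    unfolding rate G_def[symmetric]
    by (rule log_det_rate_dof[OF B mult_carrier_mat[OF G herm_carrier[OF G]]])
qed

theorem theorem1:
  fixes V :: "'v set" and E :: "'v \<Rightarrow> 'v \<Rightarrow> bool" and prec :: "'v \<Rightarrow> 'v \<Rightarrow> bool"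
    and M N :: nat and d :: "'v \<Rightarrow> nat"
    and H :: "'v \<Rightarrow> 'v \<Rightarrow> complex mat"
    and Vb Ub :: "'v \<Rightarrow> complex mat"
  assumes graph: "interference_graph V E"
    and order: "strict_partial_order_on V prec"
    and H_dim: "\<And>u v. u \<in> V \<Longrightarrow> v \<in> V \<Longrightarrow> H u v \<in> carrier_mat N M"
    and H_nonedge: "\<And>u v. u \<in> V \<Longrightarrow> v \<in> V \<Longrightarrow> u \<noteq> v \<Longrightarrow> \<not> E u v \<Longrightarrow> H u v = 0\<^sub>m N M"
    and V_dim: "\<And>v. v \<in> V \<Longrightarrow> Vb v \<in> carrier_mat M (d v)"
    and U_dim: "\<And>u. u \<in> V \<Longrightarrow> Ub u \<in> carrier_mat N (d u)"
    and ul_zf: "\<And>u v. u \<in> V \<Longrightarrow> v \<in> V \<Longrightarrow> E u v \<Longrightarrow> prec u v \<Longrightarrow>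
                  herm (Ub u) * H u v * Vb v = 0\<^sub>m (d u) (d v)"
    and ul_rank: "\<And>v. v \<in> V \<Longrightarrow> vec_space.rank (d v) (herm (Ub v) * H v v * Vb v) = d v"
  shows "(\<forall>u\<in>V. \<forall>v\<in>V. E u v \<and> prec v u \<longrightarrow>
            herm (Vb u) * herm (H v u) * Ub v = 0\<^sub>m (d u) (d v))
       \<and> (\<forall>v\<in>V. vec_space.rank (d v) (herm (Vb v) * herm (H v v) * Ub v) = d v)
       \<and> (\<forall>u\<in>V. achieves_dof
              (dl_dpc_rate V E (\<lambda>a b. prec b a) M (\<lambda>a b. herm (H b a)) Ub Vb u) (d u))"
proof -
  have sym: "\<And>u v. E u v \<Longrightarrow> E v u" and fin: "finite V"
    using graph unfolding interference_graph_def by auto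
  (* reciprocal zero-forcing: transpose the uplink condition of the reversed edge *)
  have dl_zf: "herm (Vb u) * herm (H v u) * Ub v = 0\<^sub>m (d u) (d v)"
    if "u \<in> V" "v \<in> V" "E u v" "prec v u" for u v
    using herm_triple_zero[OF herm_carrier[OF U_dim] H_dim V_dim ul_zf[OF _ _ sym]] that
    by simp
  (* reciprocal full rank: the downlink effective channel is the uplink one transposed *)
  have dl_rank: "vec_space.rank (d v) (herm (Vb v) * herm (H v v) * Ub v) = d v"
    if v: "v \<in> V" for v
  proof -
    have K: "herm (Ub v) * H v v * Vb v \<in> carrier_mat (d v) (d v)"
      using herm_carrier[OF U_dim[OF v]] H_dim[OF v v] V_dim[OF v] by auto
    show ?thesis
      using full_rank_herm[OF K ul_rank[OF v]]
      by (simp add: herm_mult3[OF herm_carrier[OF U_dim[OF v]] H_dim[OF v v] V_dim[OF v]])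
  qed
  have dl_dof: "achieves_dof (dl_dpc_rate V E (\<lambda>a b. prec b a) M (\<lambda>a b. herm (H b a)) Ub Vb u) (d u)"
    if u: "u \<in> V" for u
    by (rule dl_dpc_zero_forced_dof[where Nt = N and dt = d, OF fin u])
       (use dl_zf dl_rank u H_dim U_dim V_dim herm_carrier in auto)
  show ?thesis using dl_zf dl_rank dl_dof by blast
qed

end
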